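(* Fix $N\ge 3$. For $(p_0,p_1,p_3)\in(0,1)^3$ let $\mu_B:=\mu(p_0,p_1,p_1,p_3)$ and $\mu_C:=\mu\big((1/2+p_0)/2,(1/2+p_1)/2,(1/2+p_1)/2,(1/2+p_3)/2\big)$, with $\mu$ as defined in the context. Call $(p_0,p_1,p_3)$ a point of the Parrondo region if $\mu_B\le 0$ and $\mu_C>0$, and a point of the anti-Parrondo region if $\mu_B\ge 0$ and $\mu_C<0$. With $q_m:=1-p_m$ for $m=0,1,3$, the vector $(p_0,p_1,p_3)$ belongs to the Parrondo region if and only if $(q_3,q_1,q_0)$ belongs to the anti-Parrondo region. In particular, the Parrondo region and the anti-Parrondo region have the same (Lebesgue) volume.
   Context: Model: $N\ge 3$ players labeled $1,\ldots,N$ sit in a circle (indices mod $N$). The state space is $\Sigma=\{0,1\}^N$, with $x_i=1$ meaning player $i$ won his most recent game. For $\bm x\in\Sigma$ let $m_i(\bm x):=2x_{i-1}+x_{i+1}$ and let $\bm x^i$ be $\bm x$ with the $i$th coordinate flipped. Given $r_0,r_1,r_2,r_3\in(0,1)$ (with $s_m:=1-r_m$), each turn a uniformly random player $i$ tosses a coin with heads probability $r_{m_i(\bm x)}$, winning one unit on heads (status becomes $1$) and losing one unit on tails (status becomes $0$). This gives the irreducible aperiodic Markov chain on $\Sigma$ with $P(\bm x,\bm x^i)=N^{-1}r_{m_i(\bm x)}$ if $x_i=0$, $=N^{-1}s_{m_i(\bm x)}$ if $x_i=1$, and $P(\bm x,\bm x)=N^{-1}\big(\sum_{i:x_i=0}s_{m_i(\bm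 x)}+\sum_{i:x_i=1}r_{m_i(\bm x)}\big)$; let $\bm\pi$ be its stationary distribution and define the mean profit per turn $$\mu(r_0,r_1,r_2,r_3):=\sum_{\bm x\in\Sigma}\pi(\bm x)\sum_{i=1}^N N^{-1}\big[r_{m_i(\bm x)}-s_{m_i(\bm x)}\big],$$ the almost-sure limit of $S_n/n$ for the ensemble's cumulative profit $S_n$. Game $A$ uses a fair coin ($p=1/2$) for every player; game $B$ uses $(p_0,p_1,p_1,p_3)$; game $C=\tfrac12(A+B)$ (a fair coin toss decides which game is played each turn) therefore corresponds to parameters $r_m=(1/2+p_m)/2$. *)

theory Defs
  imports "HOL-Analysis.Analysis"
begin

text \<open>Players are labelled 0,...,N-1 (instead of 1,...,N), indices taken mod N.
  A state is a function x :: nat => bool that is False outside {0..<N};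
  x i = True means player i won his most recent game.\<close>

definition states :: "nat \<Rightarrow> (nat \<Rightarrow> bool) set" where
  "states N = {x. \<forall>i. N \<le> i \<longrightarrow> \<not> x i}"

definition bit :: "bool \<Rightarrow> nat" where
  "bit b = (if b then 1 else 0)"

definition midx :: "nat \<Rightarrow> (nat \<Rightarrow> bool) \<Rightarrow> nat \<Rightarrow> nat" where
  "midx N x i = 2 * bit (x ((i + N - 1) mod N)) + bit (x ((i + 1) mod N))"

definition flip :: "(nat \<Rightarrow> bool) \<Rightarrow> nat \<Rightarrow> (nat \<Rightarrow> bool)" where
  "flip x i = x(i := \<not> x i)"

definition par4 :: "real \<Rightarrow> real \<Rightarrow> real \<Rightarrow> real \<Rightarrow> nat \<Rightarrow> real" where
  "par4 r0 r1 r2 r3 m = (if m = 0 then r0 else if m = 1 then r1 else if m = 2 then r2 else r3)"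

definition trans :: "nat \<Rightarrow> (nat \<Rightarrow> real) \<Rightarrow> (nat \<Rightarrow> bool) \<Rightarrow> (nat \<Rightarrow> bool) \<Rightarrow> real" where
  "trans N r x y =
     (\<Sum>i<N. if y = flip x i
             then (if x i then 1 - r (midx N x i) else r (midx N x i)) / real N
             else 0)
   + (if y = x
      then (\<Sum>i<N. if x i then r (midx N x i) else 1 - r (midx N x i)) / real N
      else 0)"

definition is_stationary :: "nat \<Rightarrow> (nat \<Rightarrow> real) \<Rightarrow> ((nat \<Rightarrow> bool) \<Rightarrow> real) \<Rightarrow> bool" where
  "is_stationary N r \<pi> \<longleftrightarrow>
     (\<forall>x. x \<notin> states N \<longrightarrow> \<pi> x = 0) \<and>
     (\<forall>x \<in> states N. 0 \<le> \<pi> x) \<and>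
     (\<Sum>x\<in>states N. \<pi> x) = 1 \<and>
     (\<forall>y \<in> states N. (\<Sum>x\<in>states N. \<pi> x * trans N r x y) = \<pi> y)"

text \<open>The (unique, by irreducibility) stationary distribution.\<close>
definition stat_dist :: "nat \<Rightarrow> (nat \<Rightarrow> real) \<Rightarrow> (nat \<Rightarrow> bool) \<Rightarrow> real" where
  "stat_dist N r = (THE \<pi>. is_stationary N r \<pi>)"

definition mu :: "nat \<Rightarrow> real \<Rightarrow> real \<Rightarrow> real \<Rightarrow> real \<Rightarrow> real" where
  "mu N r0 r1 r2 r3 =
     (let r = par4 r0 r1 r2 r3 in
      \<Sum>x\<in>states N. stat_dist N r x *
        (\<Sum>i<N. (r (midx N x i) - (1 - r (midx N x i))) / real N))"

definition muB :: "nat \<Rightarrow> real \<Rightarrow> real \<Rightarrow> real \<Rightarrow> real" where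
  "muB N p0 p1 p3 = mu N p0 p1 p1 p3"

definition muC :: "nat \<Rightarrow> real \<Rightarrow> real \<Rightarrow> real \<Rightarrow> real" where
  "muC N p0 p1 p3 = mu N ((1/2 + p0)/2) ((1/2 + p1)/2) ((1/2 + p1)/2) ((1/2 + p3)/2)"

definition unit_open_cube :: "(real \<times> real \<times> real) set" where
  "unit_open_cube = {(p0, p1, p3). 0 < p0 \<and> p0 < 1 \<and> 0 < p1 \<and> p1 < 1 \<and> 0 < p3 \<and> p3 < 1}"

definition parrondo_region :: "nat \<Rightarrow> (real \<times> real \<times> real) set" where
  "parrondo_region N = {(p0, p1, p3). (p0, p1, p3) \<in> unit_open_cube \<and>
       muB N p0 p1 p3 \<le> 0 \<and> 0 < muC N p0 p1 p3}"

definition anti_parrondo_region :: "nat \<Rightarrow> (real \<times> real \<times> real) set" where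
  "anti_parrondo_region N = {(p0, p1, p3). (p0, p1, p3) \<in> unit_open_cube \<and>
       0 \<le> muB N p0 p1 p3 \<and> muC N p0 p1 p3 < 0}"

end

theory Submission
  imports Defs "Jordan_Normal_Form.Determinant"
begin

text \<open>Complementing every player's status maps m_i(x) to 3 - m_i(x) and exchanges wins and
  losses, so it conjugates the chain with parameters r to the chain with parameters
  r'(m) = 1 - r(3 - m).  The stationary distribution is transported along and the expected gain
  per turn changes sign: mu(1 - r3, 1 - r2, 1 - r1, 1 - r0) = - mu(r0, r1, r2, r3).  Both games B
  and C have r1 = r2, which this substitution preserves, so it exchanges the Parrondo and
  anti-Parrondo conditions via (p0, p1, p3) \<mapsto> (1 - p3, 1 - p1, 1 - p0), an isometry of R^3 that
  preserves Lebesgue measure.  The stationary distribution that mu refers to exists and is unique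
  because any state reaches any other by single flips, each of positive probability.\<close>

lemma left_null_vector_if_row_sums_zero:
  fixes S :: "'a set" and A :: "'a \<Rightarrow> 'a \<Rightarrow> real"
  assumes fin: "finite S" and ne: "S \<noteq> {}"
    and rows: "\<And>x. x \<in> S \<Longrightarrow> (\<Sum>y\<in>S. A x y) = 0"
  shows "\<exists>v. (\<exists>x\<in>S. v x \<noteq> 0) \<and> (\<forall>y\<in>S. (\<Sum>x\<in>S. v x * A x y) = 0)"
proof -
  define n where "n = card S"
  have n0: "n > 0" using fin ne by (simp add: n_def card_gt_0_iff)
  obtain f where f: "bij_betw f {0..<n} S" using ex_bij_betw_nat_finite[OF fin] n_def by auto
  define M where "M = mat n n (\<lambda>(i,j). A (f i) (f j))"
  have M: "M \<in> carrier_mat n n" by (simp add: M_def)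
  have sumf: "(\<Sum>x\<in>S. g x) = (\<Sum>i<n. g (f i))" for g :: "'a \<Rightarrow> real"
    using sum.reindex_bij_betw[OF f, of g] by (simp add: atLeast0LessThan)
  have "M *\<^sub>v vec n (\<lambda>_. 1) = 0\<^sub>v n"
  proof (rule eq_vecI)
    fix i assume "i < dim_vec (0\<^sub>v n :: real vec)"
    then have i: "i < n" by simp
    then have "f i \<in> S" using f by (auto simp: bij_betw_def)
    then have "(\<Sum>j<n. A (f i) (f j)) = 0" using rows sumf by simp
    then show "(M *\<^sub>v vec n (\<lambda>_. 1)) $ i = 0\<^sub>v n $ i"
      using i by (simp add: M_def scalar_prod_def atLeast0LessThan)
  qed (simp add: M_def)
  moreover have "(vec n (\<lambda>_. 1) :: real vec) \<noteq> 0\<^sub>v n"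
  proof
    assume "(vec n (\<lambda>_. 1) :: real vec) = 0\<^sub>v n"
    then have "(vec n (\<lambda>_. 1) :: real vec) $ 0 = 0\<^sub>v n $ 0" by simp
    with n0 show False by simp
  qed
  ultimately have "det M = 0" using det_0_iff_vec_prod_zero[OF M] by (metis vec_carrier)
  then have "det (transpose_mat M) = 0" using det_transpose[OF M] by simp
  moreover have "transpose_mat M \<in> carrier_mat n n" using M by simp
  ultimately obtain w where w: "w \<in> carrier_vec n" "w \<noteq> 0\<^sub>v n" "transpose_mat M *\<^sub>v w = 0\<^sub>v n"
    using det_0_iff_vec_prod_zero by blast
  define v where "v x = w $ (inv_into {0..<n} f x)" for x
  have vf: "v (f i) = w $ i" if "i < n" for i
    using that f by (simp add: v_def bij_betw_def inv_into_f_f)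
  have "\<exists>x\<in>S. v x \<noteq> 0"
  proof (rule ccontr)
    assume "\<not> ?thesis"
    then have "\<forall>i<n. w $ i = 0" using vf f by (metis atLeastLessThan_iff bij_betwE zero_le)
    then have "w = 0\<^sub>v n" using w(1) by (intro eq_vecI) auto
    with w(2) show False by simp
  qed
  moreover have "(\<Sum>x\<in>S. v x * A x y) = 0" if y: "y \<in> S" for y
  proof -
    obtain j where j: "j < n" "y = f j" using f y
      by (metis atLeastLessThan_iff bij_betw_def imageE)
    have "(\<Sum>x\<in>S. v x * A x y) = (transpose_mat M *\<^sub>v w) $ j"
      using sumf vf j w(1) by (simp add: M_def scalar_prod_def atLeast0LessThan mult.commute)
    then show ?thesis using w(3) j by simp
  qed
  ultimately show ?thesis by blast
qed

locale finite_irreducible_chain =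
  fixes S :: "'a set" and P :: "'a \<Rightarrow> 'a \<Rightarrow> real"
  assumes finite_space: "finite S"
    and P_nonneg: "\<And>x y. x \<in> S \<Longrightarrow> y \<in> S \<Longrightarrow> 0 \<le> P x y"
    and P_row_sum: "\<And>x. x \<in> S \<Longrightarrow> (\<Sum>y\<in>S. P x y) = 1"
    and irreducible: "\<And>Z. Z \<subseteq> S \<Longrightarrow> Z \<noteq> {} \<Longrightarrow>
      (\<forall>y\<in>Z. \<forall>x\<in>S. 0 < P x y \<longrightarrow> x \<in> Z) \<Longrightarrow> Z = S"
begin

definition stationary :: "('a \<Rightarrow> real) \<Rightarrow> bool" where
  "stationary v \<longleftrightarrow> (\<forall>y\<in>S. (\<Sum>x\<in>S. v x * P x y) = v y)"

lemma stationary_lincomb: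
  assumes "stationary a" "stationary b"
  shows "stationary (\<lambda>x. \<alpha> * a x + \<beta> * b x)"
  using assms unfolding stationary_def
  by (simp add: algebra_simps sum.distrib sum_distrib_left[symmetric] mult.assoc)

text \<open>Stationarity of v only gives |v| \<le> |v| P pointwise; equality follows because both sides
  have the same total mass, P being stochastic.\<close>
lemma stationary_abs:
  assumes st: "stationary v"
  shows "stationary (\<lambda>x. \<bar>v x\<bar>)"
proof -
  define g where "g y = (\<Sum>x\<in>S. \<bar>v x\<bar> * P x y) - \<bar>v y\<bar>" for y
  have g_nonneg: "0 \<le> g y" if y: "y \<in> S" for y
  proof -
    have "\<bar>v y\<bar> = \<bar>\<Sum>x\<in>S. v x * P x y\<bar>" using st y by (simp add: stationary_def)
    also have "\<dots> \<le> (\<Sum>x\<in>S. \<bar>v x * P x y\<bar>)" by (rule sum_abs)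
    also have "\<dots> = (\<Sum>x\<in>S. \<bar>v x\<bar> * P x y)"
      using P_nonneg y by (intro sum.cong) (auto simp: abs_mult)
    finally show ?thesis by (simp add: g_def)
  qed
  have "(\<Sum>y\<in>S. \<Sum>x\<in>S. \<bar>v x\<bar> * P x y) = (\<Sum>x\<in>S. \<bar>v x\<bar> * (\<Sum>y\<in>S. P x y))"
    by (subst sum.swap) (simp add: sum_distrib_left)
  also have "\<dots> = (\<Sum>x\<in>S. \<bar>v x\<bar>)" using P_row_sum by simp
  finally have "(\<Sum>y\<in>S. g y) = 0" by (simp add: g_def sum_subtractf)
  then have "\<forall>y\<in>S. g y = 0" using sum_nonneg_eq_0_iff[OF finite_space] g_nonneg by blast
  then show ?thesis by (simp add: stationary_def g_def)
qed

lemma stationary_nonneg_vanishing: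
  assumes st: "stationary u" and u_nonneg: "\<And>x. x \<in> S \<Longrightarrow> 0 \<le> u x"
    and y0: "y0 \<in> S" "u y0 = 0"
  shows "\<forall>x\<in>S. u x = 0"
proof -
  define Z where "Z = {y\<in>S. u y = 0}"
  have "Z = S"
  proof (rule irreducible)
    show "Z \<subseteq> S" "Z \<noteq> {}" using y0 by (auto simp: Z_def)
    show "\<forall>y\<in>Z. \<forall>x\<in>S. 0 < P x y \<longrightarrow> x \<in> Z"
    proof (intro ballI impI)
      fix y x assume y: "y \<in> Z" and x: "x \<in> S" and pos: "0 < P x y"
      have yS: "y \<in> S" and "(\<Sum>x\<in>S. u x * P x y) = 0"
        using y st by (auto simp: Z_def stationary_def)
      moreover have "\<And>x. x \<in> S \<Longrightarrow> 0 \<le> u x * P x y" using u_nonneg P_nonneg yS by simp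
      ultimately have "\<forall>x\<in>S. u x * P x y = 0"
        using sum_nonneg_eq_0_iff[OF finite_space, of "\<lambda>x. u x * P x y"] by simp
      then have "u x * P x y = 0" using x by blast
      then show "x \<in> Z" using pos x by (simp add: Z_def)
    qed
  qed
  then show ?thesis by (auto simp: Z_def)
qed

text \<open>The positive part of the difference of two stationary distributions is stationary and,
  unless the difference is positive everywhere (impossible for total mass 0), vanishes
  somewhere, hence everywhere.\<close>
lemma stationary_distribution_unique:
  assumes "stationary a" "stationary b" "(\<Sum>x\<in>S. a x) = 1" "(\<Sum>x\<in>S. b x) = 1"
  shows "\<forall>x\<in>S. a x = b x"
proof -
  define d where "d x = a x - b x" for x
  have st_d: "stationary d" using stationary_lincomb[OF assms(1,2), of 1 "-1"]
    by (simp add: d_def[abs_def])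
  have sum_d: "(\<Sum>x\<in>S. d x) = 0" using assms(3,4) by (simp add: d_def sum_subtractf)
  define p where "p x = (\<bar>d x\<bar> + d x) / 2" for x
  have st_p: "stationary p" using stationary_lincomb[OF stationary_abs[OF st_d] st_d, of "1/2" "1/2"]
    by (simp add: p_def[abs_def] add_divide_distrib)
  have "\<forall>x\<in>S. d x = 0"
  proof (cases "\<exists>y0\<in>S. d y0 \<le> 0")
    case True
    then obtain y0 where y0: "y0 \<in> S" "d y0 \<le> 0" by blast
    have "\<forall>x\<in>S. p x = 0"
      by (rule stationary_nonneg_vanishing[OF st_p _ y0(1)]) (use y0 in \<open>auto simp: p_def\<close>)
    then have "\<forall>x\<in>S. - d x \<ge> 0" by (auto simp: p_def)
    then have "\<forall>x\<in>S. - d x = 0"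
      using sum_nonneg_eq_0_iff[OF finite_space, of "\<lambda>x. - d x"] sum_d by (simp add: sum_negf)
    then show ?thesis by simp
  next
    case False
    then have "\<forall>x\<in>S. 0 < d x" by auto
    then have "S = {} \<or> 0 < (\<Sum>x\<in>S. d x)" using finite_space by (metis sum_pos)
    then show ?thesis using sum_d by auto
  qed
  then show ?thesis by (simp add: d_def)
qed

lemma stationary_distribution_exists:
  assumes ne: "S \<noteq> {}"
  shows "\<exists>\<pi>. (\<forall>x\<in>S. 0 \<le> \<pi> x) \<and> (\<Sum>x\<in>S. \<pi> x) = 1 \<and> stationary \<pi>"
proof -
  define A where "A x y = P x y - (if x = y then 1 else 0)" for x y
  have "(\<Sum>y\<in>S. A x y) = 0" if "x \<in> S" for x
    using that P_row_sum finite_space by (simp add: A_def sum_subtractf)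
  then obtain v where v: "\<exists>x\<in>S. v x \<noteq> 0" "\<forall>y\<in>S. (\<Sum>x\<in>S. v x * A x y) = 0"
    using left_null_vector_if_row_sums_zero[OF finite_space ne] by blast
  have "stationary v"
    unfolding stationary_def
  proof
    fix y assume y: "y \<in> S"
    have "(\<Sum>x\<in>S. v x * (if x = y then 1 else 0)) = v y"
      using y finite_space by (simp add: if_distrib cong: if_cong)
    then have "(\<Sum>x\<in>S. v x * A x y) = (\<Sum>x\<in>S. v x * P x y) - v y"
      by (simp add: A_def right_diff_distrib sum_subtractf)
    then show "(\<Sum>x\<in>S. v x * P x y) = v y" using v(2) y by simp
  qed
  then have st_w: "stationary (\<lambda>x. \<bar>v x\<bar>)" by (rule stationary_abs)
  define c where "c = (\<Sum>x\<in>S. \<bar>v x\<bar>)"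
  have "0 < c"
  proof -
    obtain x0 where x0: "x0 \<in> S" "v x0 \<noteq> 0" using v(1) by blast
    then have "\<bar>v x0\<bar> \<le> c"
      unfolding c_def using finite_space by (intro member_le_sum) auto
    with x0(2) show ?thesis by simp
  qed
  moreover have "stationary (\<lambda>x. \<bar>v x\<bar> / c)"
    using stationary_lincomb[OF st_w st_w, of "1 / c" 0] by simp
  ultimately show ?thesis
    by (intro exI[of _ "\<lambda>x. \<bar>v x\<bar> / c"]) (simp add: c_def sum_divide_distrib[symmetric])
qed

end

lemma states_eq_image_Pow: "states N = (\<lambda>A i. i \<in> A) ` Pow {..<N}"
proof
  show "states N \<subseteq> (\<lambda>A i. i \<in> A) ` Pow {..<N}"
  proof
    fix x assume "x \<in> states N"
    then have "{i. x i} \<in> Pow {..<N}" by (auto simp: states_def not_less[symmetric])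
    moreover have "x = (\<lambda>i. i \<in> {i. x i})" by simp
    ultimately show "x \<in> (\<lambda>A i. i \<in> A) ` Pow {..<N}" by blast
  qed
qed (auto simp: states_def)

lemma finite_states: "finite (states N)"
  by (simp add: states_eq_image_Pow)

lemma flip_in_states: "x \<in> states N \<Longrightarrow> i < N \<Longrightarrow> flip x i \<in> states N"
  by (auto simp: states_def flip_def)

lemma flip_flip [simp]: "flip (flip x i) i = x"
  by (auto simp: flip_def)

lemma midx_le_3: "midx N x i \<le> 3"
  by (simp add: midx_def bit_def)

definition flip_prob :: "nat \<Rightarrow> (nat \<Rightarrow> real) \<Rightarrow> (nat \<Rightarrow> bool) \<Rightarrow> nat \<Rightarrow> real" where
  "flip_prob N r x i = (if x i then 1 - r (midx N x i) else r (midx N x i)) / real N"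

definition stay_prob :: "nat \<Rightarrow> (nat \<Rightarrow> real) \<Rightarrow> (nat \<Rightarrow> bool) \<Rightarrow> real" where
  "stay_prob N r x = (\<Sum>i<N. if x i then r (midx N x i) else 1 - r (midx N x i)) / real N"

lemma trans_eq_flip_prob_stay_prob: "Defs.trans N r x y =
   (\<Sum>i<N. if y = flip x i then flip_prob N r x i else 0) + (if y = x then stay_prob N r x else 0)"
  by (simp only: Defs.trans_def flip_prob_def stay_prob_def)

definition proper_probs :: "(nat \<Rightarrow> real) \<Rightarrow> bool" where
  "proper_probs r \<longleftrightarrow> (\<forall>m. 0 < r m \<and> r m < 1)"

lemma proper_probs_par4:
  "0 < r0 \<Longrightarrow> r0 < 1 \<Longrightarrow> 0 < r1 \<Longrightarrow> r1 < 1 \<Longrightarrow> 0 < r2 \<Longrightarrow> r2 < 1 \<Longrightarrow> 0 < r3 \<Longrightarrow> r3 < 1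
    \<Longrightarrow> proper_probs (par4 r0 r1 r2 r3)"
  by (simp add: proper_probs_def par4_def)

lemma flip_prob_pos: "proper_probs r \<Longrightarrow> 0 < N \<Longrightarrow> 0 < flip_prob N r x i"
  by (auto simp: proper_probs_def flip_prob_def)

lemma stay_prob_nonneg: "proper_probs r \<Longrightarrow> 0 \<le> stay_prob N r x"
  unfolding stay_prob_def proper_probs_def
  by (intro divide_nonneg_nonneg sum_nonneg) (auto simp: less_imp_le)

lemma trans_nonneg: "proper_probs r \<Longrightarrow> 0 < N \<Longrightarrow> 0 \<le> Defs.trans N r x y"
  unfolding trans_eq_flip_prob_stay_prob
  by (intro add_nonneg_nonneg sum_nonneg) (auto simp: stay_prob_nonneg less_imp_le[OF flip_prob_pos])

lemma trans_flip_pos: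
  assumes "proper_probs r" "0 < N" "i < N"
  shows "0 < Defs.trans N r (flip y i) y"
proof -
  let ?t = "\<lambda>j. if y = flip (flip y i) j then flip_prob N r (flip y i) j else 0"
  have "0 < flip_prob N r (flip y i) i" using flip_prob_pos assms by blast
  also have "\<dots> \<le> sum ?t {..<N}"
    using member_le_sum[of i "{..<N}" ?t] assms by (auto simp: less_imp_le[OF flip_prob_pos])
  also have "\<dots> \<le> Defs.trans N r (flip y i) y"
    unfolding trans_eq_flip_prob_stay_prob using stay_prob_nonneg[OF assms(1)] by simp
  finally show ?thesis .
qed

lemma trans_row_sum:
  assumes "0 < N" and x: "x \<in> states N"
  shows "(\<Sum>y\<in>states N. Defs.trans N r x y) = 1"
proof -
  have "(\<Sum>y\<in>states N. Defs.trans N r x y)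
     = (\<Sum>i<N. \<Sum>y\<in>states N. if y = flip x i then flip_prob N r x i else 0)
       + (\<Sum>y\<in>states N. if y = x then stay_prob N r x else 0)"
    unfolding trans_eq_flip_prob_stay_prob by (simp add: sum.distrib sum.swap[of _ "states N"])
  also have "\<dots> = (\<Sum>i<N. flip_prob N r x i) + stay_prob N r x"
    using x flip_in_states[OF x] by (simp add: finite_states sum.delta)
  also have "\<dots> = (\<Sum>i<N. (if x i then 1 - r (midx N x i) else r (midx N x i))
                 + (if x i then r (midx N x i) else 1 - r (midx N x i))) / real N"
    by (simp add: flip_prob_def stay_prob_def sum_divide_distrib[symmetric] sum.distrib
        add_divide_distrib)
  also have "\<dots> = (\<Sum>i<N. 1) / real N"
    by (intro arg_cong[where f="\<lambda>s. s / real N"] sum.cong) auto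
  finally show ?thesis using assms(1) by simp
qed

text \<open>Any target state z is reached from any y0 by flipping the coordinates where they differ
  one at a time, each flip having positive probability.\<close>
lemma trans_irreducible:
  assumes pr: "proper_probs r" and N: "0 < N"
    and Z: "Z \<subseteq> states N" "Z \<noteq> {}"
    and closed: "\<forall>y\<in>Z. \<forall>x\<in>states N. 0 < Defs.trans N r x y \<longrightarrow> x \<in> Z"
  shows "Z = states N"
proof
  show "states N \<subseteq> Z"
  proof
    fix z assume z: "z \<in> states N"
    obtain y0 where y0: "y0 \<in> Z" using Z by blast
    then have y0_states: "y0 \<in> states N" using Z by blast
    define w where "w k = (\<lambda>j. if j < k then z j else y0 j)" for k
    have w_states: "w k \<in> states N" for k using z y0_states by (auto simp: states_def w_def)
    have "k \<le> N \<Longrightarrow> w k \<in> Z" for k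
    proof (induction k)
      case 0
      then show ?case using y0 by (simp add: w_def)
    next
      case (Suc k)
      then have wk: "w k \<in> Z" by simp
      show ?case
      proof (cases "z k = y0 k")
        case True
        then have "w (Suc k) = w k" by (auto simp: w_def less_Suc_eq)
        then show ?thesis using wk by simp
      next
        case False
        then have "w (Suc k) = flip (w k) k" by (auto simp: w_def flip_def less_Suc_eq)
        then have "w k = flip (w (Suc k)) k" by simp
        then have "0 < Defs.trans N r (w (Suc k)) (w k)"
          using trans_flip_pos[OF pr N, of k "w k"] Suc.prems by simp
        then show ?thesis using closed wk w_states by blast
      qed
    qed
    moreover have "w N = z" using z y0_states by (auto simp: w_def states_def fun_eq_iff)
    ultimately show "z \<in> Z" by auto
  qed
qed (use Z in simp)

lemma finite_irreducible_chain_trans: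
  assumes "proper_probs r" "0 < N"
  shows "finite_irreducible_chain (states N) (Defs.trans N r)"
proof
  show "Z = states N" if "Z \<subseteq> states N" "Z \<noteq> {}"
    "\<forall>y\<in>Z. \<forall>x\<in>states N. 0 < Defs.trans N r x y \<longrightarrow> x \<in> Z" for Z
    using trans_irreducible[OF assms that] .
qed (use assms in \<open>simp_all add: finite_states trans_nonneg trans_row_sum\<close>)

lemma ex1_is_stationary:
  assumes pr: "proper_probs r" and N: "0 < N"
  shows "\<exists>!\<pi>. is_stationary N r \<pi>"
proof -
  interpret finite_irreducible_chain "states N" "Defs.trans N r"
    using finite_irreducible_chain_trans[OF pr N] .
  have is_stationary_iff: "is_stationary N r \<pi> \<longleftrightarrow> (\<forall>x. x \<notin> states N \<longrightarrow> \<pi> x = 0)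
     \<and> (\<forall>x\<in>states N. 0 \<le> \<pi> x) \<and> (\<Sum>x\<in>states N. \<pi> x) = 1 \<and> stationary \<pi>" for \<pi>
    by (simp add: is_stationary_def stationary_def)
  have "states N \<noteq> {}" by (auto simp: states_def)
  then obtain \<pi>0 where \<pi>0: "\<forall>x\<in>states N. 0 \<le> \<pi>0 x" "(\<Sum>x\<in>states N. \<pi>0 x) = 1" "stationary \<pi>0"
    using stationary_distribution_exists by blast
  define \<pi> where "\<pi> x = (if x \<in> states N then \<pi>0 x else 0)" for x
  have st: "is_stationary N r \<pi>"
    unfolding is_stationary_iff using \<pi>0 by (simp add: \<pi>_def stationary_def cong: sum.cong)
  moreover have "\<pi>' = \<pi>" if "is_stationary N r \<pi>'" for \<pi>'
  proof
    fix x
    show "\<pi>' x = \<pi> x"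
    proof (cases "x \<in> states N")
      case True
      then show ?thesis
        using stationary_distribution_unique[of \<pi>' \<pi>] that st unfolding is_stationary_iff by blast
    next
      case False
      then show ?thesis using that st unfolding is_stationary_iff by simp
    qed
  qed
  ultimately show ?thesis by blast
qed

lemma stat_dist_eqI:
  assumes "proper_probs r" "0 < N" "is_stationary N r \<pi>"
  shows "stat_dist N r = \<pi>"
  unfolding stat_dist_def using ex1_is_stationary[OF assms(1,2)] assms(3) by (metis the1_equality)

lemma is_stationary_stat_dist:
  assumes "proper_probs r" "0 < N"
  shows "is_stationary N r (stat_dist N r)"
  unfolding stat_dist_def using theI'[OF ex1_is_stationary[OF assms]] .

definition complement :: "nat \<Rightarrow> (nat \<Rightarrow> bool) \<Rightarrow> (nat \<Rightarrow> bool)" where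
  "complement N x = (\<lambda>i. i < N \<and> \<not> x i)"

lemma complement_in_states: "complement N x \<in> states N"
  by (simp add: complement_def states_def)

lemma complement_apply: "i < N \<Longrightarrow> complement N x i = (\<not> x i)"
  by (simp add: complement_def)

lemma complement_complement: "x \<in> states N \<Longrightarrow> complement N (complement N x) = x"
  by (auto simp: complement_def states_def fun_eq_iff) (meson not_le)

lemma complement_inject:
  "x \<in> states N \<Longrightarrow> y \<in> states N \<Longrightarrow> complement N x = complement N y \<longleftrightarrow> x = y"
  by (metis complement_complement)

lemma sum_states_complement:
  "(\<Sum>x\<in>states N. g (complement N x)) = (\<Sum>x\<in>states N. g x)"
  by (rule sum.reindex_bij_betw, rule bij_betw_byWitness[where f'="complement N"])
    (auto simp: complement_complement complement_in_states)

lemma midx_complement: "0 < N \<Longrightarrow> midx N (complement N x) i = 3 - midx N x i"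
  by (simp add: midx_def complement_def bit_def)

lemma flip_complement: "i < N \<Longrightarrow> flip (complement N x) i = complement N (flip x i)"
  by (auto simp: flip_def complement_def fun_eq_iff)

lemma par4_reflect:
  "m \<le> 3 \<Longrightarrow> par4 (1 - r3) (1 - r2) (1 - r1) (1 - r0) m = 1 - par4 r0 r1 r2 r3 (3 - m)"
proof -
  assume "m \<le> 3"
  then have "m = 0 \<or> m = 1 \<or> m = 2 \<or> m = 3" by arith
  then show ?thesis by (auto simp: par4_def)
qed

lemma reflected_probs_midx_complement:
  assumes "0 < N" and reflect: "\<And>m. m \<le> 3 \<Longrightarrow> r' m = 1 - r (3 - m)"
  shows "r' (midx N (complement N x) i) = 1 - r (midx N x i)"
  using reflect[of "3 - midx N x i"] midx_le_3[of N x i] by (simp add: midx_complement[OF assms(1)])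

lemma trans_complement:
  assumes N: "0 < N" and reflect: "\<And>m. m \<le> 3 \<Longrightarrow> r' m = 1 - r (3 - m)"
    and x: "x \<in> states N" and y: "y \<in> states N"
  shows "Defs.trans N r' (complement N x) (complement N y) = Defs.trans N r x y"
proof -
  note r'_midx = reflected_probs_midx_complement[where r=r and r'=r', OF N reflect]
  have flips: "(\<Sum>i<N. if complement N y = flip (complement N x) i
                      then flip_prob N r' (complement N x) i else 0)
             = (\<Sum>i<N. if y = flip x i then flip_prob N r x i else 0)"
    using complement_inject[OF y flip_in_states[OF x]]
    by (intro sum.cong refl) (simp add: flip_complement flip_prob_def r'_midx complement_apply)
  have "stay_prob N r' (complement N x) = stay_prob N r x"
    unfolding stay_prob_def
    by (intro arg_cong[where f="\<lambda>s. s / real N"] sum.cong refl) (simp add: r'_midx complement_apply)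
  with flips show ?thesis
    unfolding trans_eq_flip_prob_stay_prob using complement_inject[OF y x] by simp
qed

lemma is_stationary_complement:
  assumes N: "0 < N" and reflect: "\<And>m. m \<le> 3 \<Longrightarrow> r' m = 1 - r (3 - m)"
    and st: "is_stationary N r \<pi>"
  shows "is_stationary N r' (\<lambda>x. if x \<in> states N then \<pi> (complement N x) else 0)"
    (is "is_stationary N r' ?\<pi>'")
  unfolding is_stationary_def
proof (intro conjI ballI allI impI)
  show "0 \<le> ?\<pi>' x" if "x \<in> states N" for x
    using that st complement_in_states by (simp add: is_stationary_def)
  show "(\<Sum>x\<in>states N. ?\<pi>' x) = 1"
    using st sum_states_complement[of \<pi>] by (simp add: is_stationary_def)
  fix y assume y: "y \<in> states N"
  let ?y' = "complement N (complement N y)"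
  have "(\<Sum>x\<in>states N. ?\<pi>' x * Defs.trans N r' x y)
      = (\<Sum>x\<in>states N. \<pi> (complement N x) * Defs.trans N r' x ?y')"
    by (intro sum.cong refl) (simp add: complement_complement[OF y])
  also have "\<dots> = (\<Sum>x\<in>states N. \<pi> (complement N (complement N x))
                       * Defs.trans N r' (complement N x) ?y')"
    by (rule sum_states_complement[symmetric])
  also have "\<dots> = (\<Sum>x\<in>states N. \<pi> x * Defs.trans N r x (complement N y))"
    by (intro sum.cong refl)
      (simp add: complement_complement
        trans_complement[where r=r and r'=r', OF N reflect _ complement_in_states])
  also have "\<dots> = ?\<pi>' y" using st y complement_in_states by (simp add: is_stationary_def)
  finally show "(\<Sum>x\<in>states N. ?\<pi>' x * Defs.trans N r' x y) = ?\<pi>' y" .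
qed simp

lemma mu_reflect:
  assumes N: "0 < N"
    and probs: "0 < r0" "r0 < 1" "0 < r1" "r1 < 1" "0 < r2" "r2 < 1" "0 < r3" "r3 < 1"
  shows "mu N (1 - r3) (1 - r2) (1 - r1) (1 - r0) = - mu N r0 r1 r2 r3"
proof -
  define r where "r = par4 r0 r1 r2 r3"
  define r' where "r' = par4 (1 - r3) (1 - r2) (1 - r1) (1 - r0)"
  define \<pi> where "\<pi> = stat_dist N r"
  define gain where "gain \<rho> x = (\<Sum>i<N. (\<rho> (midx N x i) - (1 - \<rho> (midx N x i))) / real N)" for \<rho> x
  have reflect: "\<And>m. m \<le> 3 \<Longrightarrow> r' m = 1 - r (3 - m)"
    by (simp add: r_def r'_def par4_reflect)
  have "proper_probs r" "proper_probs r'"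
    using probs by (simp_all add: r_def r'_def proper_probs_par4)
  then have stat_dist_r': "stat_dist N r' = (\<lambda>x. if x \<in> states N then \<pi> (complement N x) else 0)"
    unfolding \<pi>_def
    by (intro stat_dist_eqI N is_stationary_complement[where r=r and r'=r', OF N reflect]
        is_stationary_stat_dist)
  have gain_complement: "gain r' (complement N x) = - gain r x" for x
    unfolding gain_def sum_negf[symmetric]
    by (intro sum.cong refl)
      (simp add: reflected_probs_midx_complement[where r=r and r'=r', OF N reflect] field_simps)
  have "mu N (1 - r3) (1 - r2) (1 - r1) (1 - r0) = (\<Sum>x\<in>states N. \<pi> (complement N x) * gain r' x)"
    by (simp add: mu_def r'_def[symmetric] stat_dist_r' gain_def Let_def)
  also have "\<dots> = (\<Sum>x\<in>states N. \<pi> (complement N (complement N x)) * gain r' (complement N x))"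
    by (rule sum_states_complement[symmetric])
  also have "\<dots> = (\<Sum>x\<in>states N. - (\<pi> x * gain r x))"
    by (intro sum.cong refl) (simp add: complement_complement gain_complement)
  also have "\<dots> = - mu N r0 r1 r2 r3"
    by (simp add: mu_def r_def[symmetric] \<pi>_def gain_def Let_def sum_negf)
  finally show ?thesis .
qed

lemma parrondo_iff_reflection_anti_parrondo:
  assumes N: "0 < N" and cube: "(p0, p1, p3) \<in> unit_open_cube"
  shows "(p0, p1, p3) \<in> parrondo_region N \<longleftrightarrow> (1 - p3, 1 - p1, 1 - p0) \<in> anti_parrondo_region N"
proof -
  have p: "0 < p0" "p0 < 1" "0 < p1" "p1 < 1" "0 < p3" "p3 < 1"
    using cube by (auto simp: unit_open_cube_def)
  have mix_reflect: "(1/2 + (1 - p)) / 2 = 1 - (1/2 + p) / 2" for p :: real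
    by (simp add: field_simps)
  have "muB N (1 - p3) (1 - p1) (1 - p0) = - muB N p0 p1 p3"
    unfolding muB_def using mu_reflect[OF N p(1-4) p(3-6)] .
  moreover have "muC N (1 - p3) (1 - p1) (1 - p0) = - muC N p0 p1 p3"
    unfolding muC_def mix_reflect using p by (intro mu_reflect[OF N]) auto
  moreover have "(1 - p3, 1 - p1, 1 - p0) \<in> unit_open_cube"
    using p by (auto simp: unit_open_cube_def)
  ultimately show ?thesis
    using cube by (auto simp: parrondo_region_def anti_parrondo_region_def)
qed

definition cube_reflection :: "real \<times> real \<times> real \<Rightarrow> real \<times> real \<times> real" where
  "cube_reflection = (\<lambda>(a, b, c). (1 - c, 1 - b, 1 - a))"

lemma cube_reflection_involution [simp]: "cube_reflection (cube_reflection p) = p"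
  by (cases p) (simp add: cube_reflection_def)

lemma parrondo_region_eq_vimage:
  assumes "0 < N"
  shows "parrondo_region N = cube_reflection -` anti_parrondo_region N"
proof (rule Set.set_eqI)
  fix p :: "real \<times> real \<times> real"
  obtain p0 p1 p3 where p: "p = (p0, p1, p3)" by (cases p)
  show "p \<in> parrondo_region N \<longleftrightarrow> p \<in> cube_reflection -` anti_parrondo_region N"
  proof (cases "p \<in> unit_open_cube")
    case True
    then show ?thesis
      using parrondo_iff_reflection_anti_parrondo[OF assms] by (simp add: p cube_reflection_def)
  next
    case False
    then have "(1 - p3, 1 - p1, 1 - p0) \<notin> unit_open_cube" by (auto simp: p unit_open_cube_def)
    with False show ?thesis
      by (auto simp: p cube_reflection_def parrondo_region_def anti_parrondo_region_def)
  qed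
qed

lemma Basis_real3: "(Basis :: (real \<times> real \<times> real) set) = {(1, 0, 0), (0, 1, 0), (0, 0, 1)}"
  by (auto simp: Basis_prod_def zero_prod_def)

lemma prod_Basis_real3:
  "(\<Prod>b\<in>(Basis :: (real \<times> real \<times> real) set). f b) = f (1, 0, 0) * f (0, 1, 0) * f (0, 0, 1)"
  by (simp add: Basis_real3 mult.assoc)

lemma measurable_cube_reflection [measurable]: "cube_reflection \<in> borel \<rightarrow>\<^sub>M borel"
  unfolding cube_reflection_def case_prod_unfold
  by (intro borel_measurable_continuous_onI continuous_intros)

lemma distr_lborel_cube_reflection: "distr lborel borel cube_reflection = lborel"
proof (rule lborel_eqI[symmetric])
  fix l u :: "real \<times> real \<times> real"
  assume le: "\<And>b. b \<in> Basis \<Longrightarrow> l \<bullet> b \<le> u \<bullet> b"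
  obtain l1 l2 l3 u1 u2 u3 where lu: "l = (l1, l2, l3)" "u = (u1, u2, u3)"
    using prod_cases3 by metis
  have "l1 \<le> u1" "l2 \<le> u2" "l3 \<le> u3"
    using le[of "(1, 0, 0)"] le[of "(0, 1, 0)"] le[of "(0, 0, 1)"] by (auto simp: lu Basis_real3)
  moreover have "cube_reflection -` box l u = box (1 - u3, 1 - u2, 1 - u1) (1 - l3, 1 - l2, 1 - l1)"
    by (auto simp: cube_reflection_def lu box_def Basis_real3)
  ultimately show "emeasure (distr lborel borel cube_reflection) (box l u) = (\<Prod>b\<in>Basis. (u - l) \<bullet> b)"
    by (simp add: emeasure_distr emeasure_lborel_box_eq prod_Basis_real3 lu Basis_real3)
qed simp

text \<open>Non-measurable sets are handled separately: their preimages are non-measurable too,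
  and lborel assigns measure 0 to both.\<close>
lemma emeasure_lborel_vimage_cube_reflection:
  "emeasure lborel (cube_reflection -` A) = emeasure lborel A"
proof (cases "A \<in> sets lborel")
  case True
  then have "emeasure (distr lborel borel cube_reflection) A = emeasure lborel (cube_reflection -` A)"
    by (subst emeasure_distr) auto
  then show ?thesis by (simp add: distr_lborel_cube_reflection)
next
  case False
  have "cube_reflection -` (cube_reflection -` A) = A" unfolding vimage_def by simp
  then have "cube_reflection -` A \<notin> sets lborel"
    using False measurable_sets[OF measurable_cube_reflection, of "cube_reflection -` A"] by auto
  with False show ?thesis by (simp add: emeasure_notin_sets)
qed

theorem theorem2:
  fixes N :: nat
  assumes "3 \<le> N"
  shows "(\<forall>p0 p1 p3. (p0, p1, p3) \<in> unit_open_cube \<longrightarrow>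
            ((p0, p1, p3) \<in> parrondo_region N \<longleftrightarrow>
             (1 - p3, 1 - p1, 1 - p0) \<in> anti_parrondo_region N))
       \<and> emeasure lborel (parrondo_region N) = emeasure lborel (anti_parrondo_region N)"
proof -
  have N: "0 < N" using assms by simp
  show ?thesis
  proof
    show "\<forall>p0 p1 p3. (p0, p1, p3) \<in> unit_open_cube \<longrightarrow>
            ((p0, p1, p3) \<in> parrondo_region N \<longleftrightarrow>
             (1 - p3, 1 - p1, 1 - p0) \<in> anti_parrondo_region N)"
      using parrondo_iff_reflection_anti_parrondo[OF N] by blast
    show "emeasure lborel (parrondo_region N) = emeasure lborel (anti_parrondo_region N)"
      by (simp only: parrondo_region_eq_vimage[OF N] emeasure_lborel_vimage_cube_reflection)
  qed
qed

end
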